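(* Suppose that every $\mathbb{C}$-algebra endomorphism $f$ of $\mathbb{C}[x,y]$ with $\operatorname{Jac}(f(x),f(y))\in\mathbb{C}^*$ is an automorphism of $\mathbb{C}[x,y]$ (the two-dimensional Jacobian Conjecture over $\mathbb{C}$). Then for every integral domain $D$ of characteristic zero and all $A,B,w\in D[x,y]$ with $\operatorname{Jac}(A,B)\in D^*$ and $\operatorname{Jac}(A,w)=0$, one has $w\in D[A]$.
   Context: $\operatorname{Jac}(u,v):=u_xv_y-u_yv_x$ for polynomials $u,v$ in two variables $x,y$. $D^*$ is the group of units of $D$. $D[A]$ is the $D$-subalgebra of $D[x,y]$ generated by $A$. *)

theory Defs
  imports Complex_Main "HOL-Computational_Algebra.Polynomial"
begin

text \<open>Bivariate polynomials D[x,y] are represented as D[x][y], i.e. the type 'a poly poly: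
  the outer variable is y, the coefficients are polynomials in x.\<close>

definition const2 :: "'a::zero \<Rightarrow> 'a poly poly" where
  "const2 c = [:[:c:]:]"

definition pderiv_x :: "'a::idom poly poly \<Rightarrow> 'a poly poly" where
  "pderiv_x p = map_poly pderiv p"

definition pderiv_y :: "'a::idom poly poly \<Rightarrow> 'a poly poly" where
  "pderiv_y p = pderiv p"

definition Jac :: "'a::idom poly poly \<Rightarrow> 'a poly poly \<Rightarrow> 'a poly poly" where
  "Jac u v = pderiv_x u * pderiv_y v - pderiv_y u * pderiv_x v"

text \<open>Substitution h(f,g): the D-algebra endomorphism of D[x,y] sending x to f and y to g, applied to h.\<close>
definition subst2 :: "'a::comm_ring_1 poly poly \<Rightarrow> 'a poly poly \<Rightarrow> 'a poly poly \<Rightarrow> 'a poly poly" where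
  "subst2 h f g = poly (map_poly (\<lambda>c. poly (map_poly const2 c) f) h) g"

definition gen_subalg :: "'a::comm_ring_1 poly poly \<Rightarrow> 'a poly poly set" where
  "gen_subalg A = {poly (map_poly const2 p) A | p. True}"

definition Jac_unit :: "'a::idom poly poly \<Rightarrow> 'a poly poly \<Rightarrow> bool" where
  "Jac_unit u v \<longleftrightarrow> (\<exists>c::'a. c dvd 1 \<and> Jac u v = const2 c)"

definition JC2_complex :: bool where
  "JC2_complex \<longleftrightarrow> (\<forall>f g :: complex poly poly. Jac_unit f g \<longrightarrow> bij (\<lambda>h. subst2 h f g))"

end

theory Submission
  imports Defs
begin

text \<open>
  Since \<open>Jac(A,B)\<close> is a
  unit and \<open>Jac(A,w) = 0\<close>, Cramer's rule gives \<open>\<nabla>w = u \<nabla>A\<close> with \<open>Jac(A,u) = 0\<close>, and when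
  \<open>A\<close> involves \<open>y\<close> the \<open>y\<close>-degree of \<open>u\<close> is smaller than that of \<open>w\<close>. By induction
  \<open>\<delta> u = q(A)\<close> for some nonzero \<open>\<delta> \<in> D\<close>; integrating \<open>q\<close> up to a factor \<open>N\<close> gives a polynomial
  \<open>p\<close> with \<open>\<nabla>(\<delta> N w - p(A)) = 0\<close>, so \<open>\<delta> N w\<close> lies in \<open>D[A]\<close> (characteristic zero).
  To remove the denominator, restrict to a line through the origin on which \<open>A\<close> has a unit linear
  coefficient: then \<open>p(a(t)) \<equiv> 0 mod \<delta>\<close> forces \<open>p \<equiv> 0 mod \<delta>\<close>. If \<open>A\<close> does not involve
  \<open>y\<close>, it is linear in \<open>x\<close> with unit slope and \<open>w\<close> is a polynomial in \<open>x\<close> alone.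
\<close>

lemma const2_0 [simp]: "const2 0 = 0"
  by (simp add: const2_def)

lemma const2_1 [simp]: "const2 1 = 1"
  by (simp add: const2_def one_pCons)

lemma const2_add: "const2 (a + b) = const2 a + const2 b"
  by (simp add: const2_def)

lemma const2_mult: "const2 (a * b) = (const2 a * const2 b :: 'a::comm_ring_1 poly poly)"
  by (simp add: const2_def)

lemma const2_eq_iff [simp]: "const2 a = const2 b \<longleftrightarrow> a = b"
  by (simp add: const2_def)

lemma map_poly_add:
  assumes "f 0 = 0" "\<And>a b. f (a + b) = f a + f b"
  shows "map_poly f (p + q) = map_poly f p + map_poly f q"
  by (rule poly_eqI) (simp add: coeff_map_poly assms)

lemma poly_map_poly_mult:
  fixes f :: "'a::comm_ring_1 \<Rightarrow> 'b::comm_ring_1"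
  assumes "f 0 = 0" "\<And>a b. f (a + b) = f a + f b" "\<And>a b. f (a * b) = f a * f b"
  shows "poly (map_poly f (p * q)) x = poly (map_poly f p) x * poly (map_poly f q) x"
  by (induct p) (simp_all add: map_poly_pCons map_poly_add map_poly_smult assms algebra_simps)

definition peval :: "'a::comm_ring_1 poly \<Rightarrow> 'a poly poly \<Rightarrow> 'a poly poly" where
  "peval p A = poly (map_poly const2 p) A"

lemma peval_in_gen_subalg: "peval p A \<in> gen_subalg A"
  by (auto simp: gen_subalg_def peval_def)

lemma peval_0 [simp]: "peval 0 A = 0"
  by (simp add: peval_def)

lemma peval_pCons: "peval (pCons a p) A = const2 a + A * peval p A"
  by (simp add: peval_def map_poly_pCons)

lemma peval_const [simp]: "peval [:a:] A = const2 a"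
  by (simp add: peval_pCons)

lemma peval_add: "peval (p + q) A = peval p A + peval q A"
  by (simp add: peval_def map_poly_add const2_add)

lemma peval_smult: "peval (smult c p) A = const2 c * peval p A"
  by (simp add: peval_def map_poly_smult const2_mult)

lemma peval_of_const_poly: "peval p [:a:] = [:pcompose p a:]"
  by (induct p) (simp_all add: peval_pCons pcompose_pCons const2_def)

lemma pderiv_sum: "pderiv (sum f I) = (\<Sum>i\<in>I. pderiv (f i))"
  using higher_pderiv_sum[of 1] by simp

lemma pderiv_x_0 [simp]: "pderiv_x 0 = 0"
  by (simp add: pderiv_x_def)

lemma pderiv_x_add: "pderiv_x (f + g) = pderiv_x f + pderiv_x g"
  by (rule poly_eqI) (simp add: pderiv_x_def coeff_map_poly pderiv_add)

lemma pderiv_x_diff: "pderiv_x (f - g) = pderiv_x f - pderiv_x g"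
  by (rule poly_eqI) (simp add: pderiv_x_def coeff_map_poly pderiv_diff)

lemma pderiv_x_mult: "pderiv_x (f * g) = pderiv_x f * g + f * pderiv_x g"
proof (rule poly_eqI)
  fix n
  show "coeff (pderiv_x (f * g)) n = coeff (pderiv_x f * g + f * pderiv_x g) n"
    unfolding pderiv_x_def coeff_add coeff_map_poly[of pderiv, OF pderiv_0] coeff_mult pderiv_sum
      sum.distrib[symmetric]
    by (rule sum.cong) (simp_all add: pderiv_mult coeff_map_poly algebra_simps)
qed

lemma pderiv_x_const2 [simp]: "pderiv_x (const2 c) = 0"
  by (simp add: pderiv_x_def const2_def map_poly_pCons)

lemma pderiv_y_0 [simp]: "pderiv_y 0 = 0"
  by (simp add: pderiv_y_def)

lemma pderiv_y_add: "pderiv_y (f + g) = pderiv_y f + pderiv_y g"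
  by (simp add: pderiv_y_def pderiv_add)

lemma pderiv_y_diff: "pderiv_y (f - g) = pderiv_y f - pderiv_y g"
  by (simp add: pderiv_y_def pderiv_diff)

lemma pderiv_y_mult: "pderiv_y (f * g) = pderiv_y f * g + f * pderiv_y g"
  by (simp add: pderiv_y_def pderiv_mult algebra_simps)

lemma pderiv_y_const2 [simp]: "pderiv_y (const2 c) = 0"
  by (simp add: pderiv_y_def const2_def)

lemma pderiv_x_pderiv_y_commute: "pderiv_y (pderiv_x f) = pderiv_x (pderiv_y f)"
  by (rule poly_eqI)
     (simp add: pderiv_x_def pderiv_y_def coeff_map_poly coeff_pderiv pderiv_mult pderiv_add)

lemma pderiv_x_peval: "pderiv_x (peval p A) = peval (pderiv p) A * pderiv_x A"
  by (induct p) (simp_all add: peval_pCons pderiv_x_add pderiv_x_mult pderiv_pCons peval_add algebra_simps)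

lemma pderiv_y_peval: "pderiv_y (peval p A) = peval (pderiv p) A * pderiv_y A"
  by (induct p) (simp_all add: peval_pCons pderiv_y_add pderiv_y_mult pderiv_pCons peval_add algebra_simps)

lemma Jac_unit_imp_gradient_parallel:
  fixes A B w :: "'a::idom poly poly"
  assumes "Jac_unit A B" and "Jac A w = 0"
  obtains u where "pderiv_x w = u * pderiv_x A" and "pderiv_y w = u * pderiv_y A"
proof -
  obtain c where "c dvd 1" and J: "Jac A B = const2 c"
    using assms(1) by (auto simp: Jac_unit_def)
  then obtain ci where "c * ci = 1"
    by (metis dvdE)
  then have inv: "const2 ci * Jac A B = 1"
    by (simp add: J const2_mult[symmetric] mult.commute)
  have divide: "p = (const2 ci * q) * r" if "p * Jac A B = q * r" for p q r
    using inv that by (metis mult.assoc mult.left_commute mult_1_right)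
  show thesis
  proof (rule that; rule divide)
    show "pderiv_x w * Jac A B = Jac w B * pderiv_x A"
      using assms(2) by (simp add: Jac_def algebra_simps)
    show "pderiv_y w * Jac A B = Jac w B * pderiv_y A"
      using assms(2) by (simp add: Jac_def algebra_simps)
  qed
qed

lemma Jac_eq_0_of_gradient_parallel:
  fixes A u w :: "'a::idom poly poly"
  assumes "pderiv_x w = u * pderiv_x A" and "pderiv_y w = u * pderiv_y A"
  shows "Jac A u = 0"
proof -
  have "pderiv_y (u * pderiv_x A) = pderiv_x (u * pderiv_y A)"
    using pderiv_x_pderiv_y_commute[of w] by (simp add: assms)
  then show ?thesis
    by (simp add: Jac_def pderiv_x_mult pderiv_y_mult pderiv_x_pderiv_y_commute algebra_simps)
qed

lemma exists_pderiv_eq_smult: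
  fixes q :: "'a::idom poly"
  obtains p N where "N > 0" and "pderiv p = smult (of_nat N) q"
proof -
  define N :: nat where "N = fact (Suc (degree q))"
  define p where "p = (\<Sum>i\<le>degree q. monom (of_nat (N div Suc i) * coeff q i) (Suc i))"
  have N: "of_nat (Suc i) * of_nat (N div Suc i) = (of_nat N :: 'a)" if "i \<le> degree q" for i
  proof -
    have "Suc i dvd N"
      unfolding N_def using that by (intro dvd_fact) auto
    then show ?thesis
      by (metis dvd_mult_div_cancel of_nat_mult)
  qed
  have "pderiv p = (\<Sum>i\<le>degree q. monom (of_nat N * coeff q i) i)"
    unfolding p_def pderiv_sum
    by (rule sum.cong) (simp_all add: pderiv_monom N mult.assoc[symmetric] del: of_nat_Suc)
  also have "\<dots> = smult (of_nat N) (\<Sum>i\<le>degree q. monom (coeff q i) i)"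
    by (induct rule: infinite_finite_induct) (simp_all add: smult_monom smult_add_right)
  also have "\<dots> = smult (of_nat N) q"
    by (simp add: poly_as_sum_of_monoms)
  finally show thesis
    by (rule that[rotated]) (simp add: N_def)
qed

lemma pderivs_eq_0_imp_const2:
  fixes z :: "'a::{idom,ring_char_0} poly poly"
  assumes "pderiv_x z = 0" and "pderiv_y z = 0"
  obtains e where "z = const2 e"
proof -
  obtain v where z: "z = [:v:]"
    using assms(2) by (auto simp: pderiv_y_def pderiv_eq_0_iff elim: degree_eq_zeroE)
  have "pderiv v = 0"
    using assms(1) by (simp add: z pderiv_x_def map_poly_pCons)
  then obtain e where "v = [:e:]"
    by (auto simp: pderiv_eq_0_iff elim: degree_eq_zeroE)
  then show thesis
    by (intro that) (simp add: z const2_def)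
qed

lemma Jac_eq_0_imp_multiple_peval:
  fixes A B w :: "'a::{idom,ring_char_0} poly poly"
  assumes "Jac_unit A B" and "pderiv_y A \<noteq> 0" and "Jac A w = 0"
  shows "\<exists>\<delta> p. \<delta> \<noteq> 0 \<and> const2 \<delta> * w = peval p A"
  using assms(3)
proof (induction "degree w" arbitrary: w rule: less_induct)
  case less
  obtain u where x: "pderiv_x w = u * pderiv_x A" and y: "pderiv_y w = u * pderiv_y A"
    using Jac_unit_imp_gradient_parallel[OF assms(1) less.prems] .
  have "\<exists>\<delta> q. \<delta> \<noteq> 0 \<and> const2 \<delta> * u = peval q A"
  proof (cases "u = 0")
    case True
    then show ?thesis
      by (intro exI[of _ 1] exI[of _ 0]) simp
  next
    case False
    then have "pderiv w \<noteq> 0" and "degree (pderiv w) = degree u + degree (pderiv_y A)"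
      using y assms(2) by (simp_all add: pderiv_y_def degree_mult_eq)
    then have "degree u < degree w"
      by (auto simp: degree_pderiv pderiv_eq_0_iff)
    then show ?thesis
      using less.hyps Jac_eq_0_of_gradient_parallel[OF x y] by blast
  qed
  then obtain \<delta> q where "\<delta> \<noteq> 0" and u: "const2 \<delta> * u = peval q A"
    by blast
  obtain p N where "N > 0" and p: "pderiv p = smult (of_nat N) q"
    using exists_pderiv_eq_smult .
  define z where "z = const2 (\<delta> * of_nat N) * w - peval p A"
  have cancel: "const2 (\<delta> * of_nat N) * (u * a) - peval (pderiv p) A * a = 0" for a
    by (simp add: p peval_smult const2_mult flip: u)
  have "pderiv_x z = 0"
    using cancel by (simp add: z_def pderiv_x_diff pderiv_x_mult pderiv_x_peval x)
  moreover have "pderiv_y z = 0"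
    using cancel by (simp add: z_def pderiv_y_diff pderiv_y_mult pderiv_y_peval y)
  ultimately obtain e where "z = const2 e"
    by (rule pderivs_eq_0_imp_const2)
  then have "const2 (\<delta> * of_nat N) * w = peval (p + [:e:]) A"
    by (simp add: z_def peval_add algebra_simps)
  moreover have "\<delta> * of_nat N \<noteq> 0"
    using \<open>\<delta> \<noteq> 0\<close> \<open>N > 0\<close> by simp
  ultimately show ?case
    by blast
qed

lemma const_poly_dvd_pCons_iff:
  fixes \<delta> :: "'a::idom"
  shows "[:\<delta>:] dvd pCons r p \<longleftrightarrow> \<delta> dvd r \<and> [:\<delta>:] dvd p"
  by (auto simp: const_poly_dvd_iff coeff_pCons split: nat.split)

lemma const_poly_dvd_pcompose:
  fixes p q :: "'a::idom poly"
  assumes "[:\<delta>:] dvd p"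
  shows "[:\<delta>:] dvd pcompose p q"
  using assms by (metis dvdE dvd_triv_left pcompose_mult pcompose_const)

lemma const_poly_dvd_mult_cancel:
  fixes a h :: "'a::idom poly"
  assumes "coeff a 0 dvd 1" and "[:\<delta>:] dvd a * h"
  shows "[:\<delta>:] dvd h"
proof -
  have "\<delta> dvd coeff h n" for n
  proof (induction n rule: less_induct)
    case (less n)
    have "coeff (h * a) n = (\<Sum>i<n. coeff h i * coeff a (n - i)) + coeff h n * coeff a 0"
      by (simp add: coeff_mult flip: lessThan_Suc_atMost)
    moreover have "\<delta> dvd coeff (h * a) n"
      using assms(2) by (simp add: const_poly_dvd_iff mult.commute)
    moreover have "\<delta> dvd (\<Sum>i<n. coeff h i * coeff a (n - i))"
      by (intro dvd_sum dvd_mult2 less.IH) simp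
    ultimately have "\<delta> dvd coeff h n * coeff a 0"
      by (simp add: dvd_add_right_iff)
    moreover obtain v where "1 = coeff a 0 * v"
      using assms(1) by (rule dvdE)
    ultimately show ?case
      by (metis dvd_mult2 mult.assoc mult_1_right)
  qed
  then show ?thesis
    by (simp add: const_poly_dvd_iff)
qed

lemma const_poly_dvd_pcompose_cancel:
  fixes R a :: "'a::idom poly"
  assumes "coeff a 1 dvd 1" and "[:\<delta>:] dvd pcompose R a"
  shows "[:\<delta>:] dvd R"
proof -
  define b where "b = a - [:coeff a 0:]"
  have "coeff b 0 = 0" and "coeff b 1 = coeff a 1"
    by (simp_all add: b_def)
  then obtain b1 where b: "b = pCons 0 b1" and "coeff b1 0 dvd 1"
    using assms(1) by (cases b) auto
  have cancel: "[:\<delta>:] dvd S" if "[:\<delta>:] dvd pcompose S b" for S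
    using that
  proof (induction S)
    case (pCons r S)
    then have "\<delta> dvd r" and "[:\<delta>:] dvd b1 * pcompose S b"
      by (simp_all add: pcompose_pCons b const_poly_dvd_pCons_iff)
    moreover have "[:\<delta>:] dvd S"
      using pCons.IH const_poly_dvd_mult_cancel[OF \<open>coeff b1 0 dvd 1\<close>] calculation(2) by blast
    ultimately show ?case
      by (simp add: const_poly_dvd_pCons_iff)
  qed simp
  have "pcompose R a = pcompose (pcompose R [:coeff a 0, 1:]) b"
    by (simp add: b_def pcompose_pCons flip: pcompose_assoc)
  with assms(2) have "[:\<delta>:] dvd pcompose R [:coeff a 0, 1:]"
    by (metis cancel)
  then have "[:\<delta>:] dvd pcompose (pcompose R [:coeff a 0, 1:]) [:- coeff a 0, 1:]"
    by (rule const_poly_dvd_pcompose)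
  then show ?thesis
    by (simp add: pcompose_pCons flip: pcompose_assoc)
qed

definition restrict_line :: "'a::comm_ring_1 \<Rightarrow> 'a \<Rightarrow> 'a poly poly \<Rightarrow> 'a poly" where
  "restrict_line \<alpha> \<beta> f = poly (map_poly (\<lambda>c. pcompose c [:0, \<alpha>:]) f) [:0, \<beta>:]"

lemma restrict_line_pCons:
  "restrict_line \<alpha> \<beta> (pCons c f) = pcompose c [:0, \<alpha>:] + [:0, \<beta>:] * restrict_line \<alpha> \<beta> f"
  by (simp add: restrict_line_def map_poly_pCons)

lemma restrict_line_0 [simp]: "restrict_line \<alpha> \<beta> 0 = 0"
  by (simp add: restrict_line_def)

lemma restrict_line_mult:
  "restrict_line \<alpha> \<beta> (f * g) = restrict_line \<alpha> \<beta> f * restrict_line \<alpha> \<beta> g"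
  unfolding restrict_line_def by (rule poly_map_poly_mult) (simp_all add: pcompose_add pcompose_mult)

lemma restrict_line_const2 [simp]: "restrict_line \<alpha> \<beta> (const2 c) = [:c:]"
  by (simp add: const2_def restrict_line_pCons)

lemma restrict_line_peval: "restrict_line \<alpha> \<beta> (peval p A) = pcompose p (restrict_line \<alpha> \<beta> A)"
proof (induct p)
  case (pCons a p)
  have "restrict_line \<alpha> \<beta> (f + g) = restrict_line \<alpha> \<beta> f + restrict_line \<alpha> \<beta> g" for f g
    unfolding restrict_line_def by (simp add: map_poly_add pcompose_add)
  with pCons show ?case
    by (simp add: peval_pCons restrict_line_mult pcompose_pCons)
qed simp

lemma coeff_restrict_line_1:
  "coeff (restrict_line \<alpha> \<beta> f) 1 = \<alpha> * coeff (coeff f 0) 1 + \<beta> * coeff (coeff f 1) 0"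
proof -
  have "coeff (restrict_line \<alpha> \<beta> g) 0 = coeff (coeff g 0) 0" for g
    by (cases g) (simp add: restrict_line_pCons coeff_pcompose_linear poly_0_coeff_0)
  then show ?thesis
    by (cases f) (simp add: restrict_line_pCons coeff_pcompose_linear)
qed

lemma multiple_peval_imp_in_gen_subalg:
  fixes A B w :: "'a::idom poly poly"
  assumes "Jac_unit A B" and "\<delta> \<noteq> 0" and "const2 \<delta> * w = peval p A"
  shows "w \<in> gen_subalg A"
proof -
  obtain c where "c dvd 1" and J: "Jac A B = const2 c"
    using assms(1) by (auto simp: Jac_unit_def)
  \<comment> \<open>along the direction \<open>(B\<^sub>y(0), -B\<^sub>x(0))\<close> the slope of \<open>A\<close> at the origin is \<open>Jac(A,B)(0)\<close>\<close>
  define a where "a = restrict_line (coeff (coeff B 1) 0) (- coeff (coeff B 0) 1) A"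
  have "coeff a 1 = coeff (coeff (Jac A B) 0) 0"
    unfolding a_def coeff_restrict_line_1
    by (simp add: Jac_def pderiv_x_def pderiv_y_def coeff_mult_0
        coeff_map_poly coeff_pderiv algebra_simps)
  then have "coeff a 1 dvd 1"
    using \<open>c dvd 1\<close> by (simp add: J const2_def)
  moreover have "smult \<delta> (restrict_line (coeff (coeff B 1) 0) (- coeff (coeff B 0) 1) w) = pcompose p a"
    using arg_cong[OF assms(3), of "restrict_line _ _"]
    by (simp add: a_def restrict_line_mult restrict_line_peval)
  then have "[:\<delta>:] dvd pcompose p a"
    by (metis dvd_triv_left mult_smult_left mult_1 smult_one)
  ultimately obtain r where "p = [:\<delta>:] * r"
    using const_poly_dvd_pcompose_cancel by (blast elim: dvdE)
  then have "const2 \<delta> * w = const2 \<delta> * peval r A"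
    using assms(3) by (simp add: peval_smult)
  then have "w = peval r A"
    using assms(2) by (metis const2_0 const2_eq_iff mult_left_cancel)
  then show ?thesis
    by (simp add: peval_in_gen_subalg)
qed

lemma surj_pcompose_linear:
  fixes a :: "'a::comm_ring_1 poly"
  assumes "degree a \<le> 1" and "coeff a 1 dvd 1"
  shows "surj (\<lambda>r. pcompose r a)"
proof -
  have a: "a = [:coeff a 0, coeff a 1:]"
    using assms(1) by (intro poly_eqI) (auto simp: coeff_pCons coeff_eq_0 split: nat.split)
  obtain b where "1 = coeff a 1 * b"
    using assms(2) by (rule dvdE)
  then have "pcompose [:- coeff a 0 * b, b:] a = [:0, 1:]"
    by (subst a) (simp add: pcompose_pCons algebra_simps)
  then have "v = pcompose (pcompose v [:- coeff a 0 * b, b:]) a" for v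
    by (simp flip: pcompose_assoc)
  then show ?thesis
    by (metis surjI)
qed

lemma Jac_eq_0_imp_in_gen_subalg_of_pderiv_y_eq_0:
  fixes A B w :: "'a::{idom,ring_char_0} poly poly"
  assumes "Jac_unit A B" and "pderiv_y A = 0" and "Jac A w = 0"
  shows "w \<in> gen_subalg A"
proof -
  obtain c where "c dvd 1" and J: "Jac A B = const2 c"
    using assms(1) by (auto simp: Jac_unit_def)
  obtain a where A: "A = [:a:]"
    using assms(2) by (auto simp: pderiv_y_def pderiv_eq_0_iff elim: degree_eq_zeroE)
  have Ax: "pderiv_x A = [:pderiv a:]"
    by (simp add: A pderiv_x_def map_poly_pCons)
  have "[:pderiv a:] * pderiv_y B = [:[:c:]:]"
    using J by (simp add: Jac_def Ax assms(2) const2_def)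
  then have "pderiv a * coeff (pderiv_y B) 0 = [:c:]"
    by (metis coeff_mult_0 coeff_pCons_0)
  then have "pderiv a dvd 1"
    using \<open>c dvd 1\<close> by (metis const_poly_dvd_const_poly_iff dvd_trans dvd_triv_left one_pCons)
  then obtain a1 where a1: "pderiv a = [:a1:]" and "a1 dvd 1"
    by (auto simp: is_unit_poly_iff)
  have "degree a \<le> 1"
    using degree_pderiv[of a] by (simp add: a1)
  have "coeff a 1 dvd 1"
    using coeff_pderiv[of a 0] \<open>a1 dvd 1\<close> by (simp add: a1)
  have "[:pderiv a:] * pderiv_y w = 0"
    using assms(3) by (simp add: Jac_def Ax assms(2))
  then obtain v where w: "w = [:v:]"
    using a1 \<open>a1 dvd 1\<close> by (auto simp: pderiv_y_def pderiv_eq_0_iff elim: degree_eq_zeroE)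
  obtain r where "v = pcompose r a"
    using surj_pcompose_linear[OF \<open>degree a \<le> 1\<close> \<open>coeff a 1 dvd 1\<close>] by blast
  then have "w = peval r A"
    by (simp add: w A peval_of_const_poly)
  then show ?thesis
    by (simp add: peval_in_gen_subalg)
qed

theorem theorem3p6:
  fixes A B w :: "'a::{idom, ring_char_0} poly poly"
  assumes "JC2_complex"
    and "Jac_unit A B"
    and "Jac A w = 0"
  shows "w \<in> gen_subalg A"
proof (cases "pderiv_y A = 0")
  case True
  then show ?thesis
    using Jac_eq_0_imp_in_gen_subalg_of_pderiv_y_eq_0 assms(2,3) by blast
next
  case False
  then obtain \<delta> p where "\<delta> \<noteq> 0" and "const2 \<delta> * w = peval p A"
    using Jac_eq_0_imp_multiple_peval assms(2,3) by blast
  then show ?thesis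
    using multiple_peval_imp_in_gen_subalg assms(2) by blast
qed

end
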